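(* Consider U-PB$(\hat x_0,\chi,\lambda_0,\bar\varepsilon,\overline N)$ described in the context. Let $j$ be an iteration of a cycle with prox stepsize $\lambda$ and first iteration $i$, and suppose $t_j>(1-\chi)\bar\varepsilon/2$. Then \[ j-i<(1+u_\lambda)\log\left(\frac{4t_i}{(1-\chi)\bar\varepsilon}\right),\qquad u_\lambda:=\frac{4\lambda[2M_f^2+(1-\chi)\bar\varepsilon L_f]}{(1-\chi)\bar\varepsilon}. \]
   Context: Setting: $f,h:\mathbb{R}^n\to\mathbb{R}\cup\{+\infty\}$ proper lsc convex, $\mathrm{dom}\, h\subseteq\mathrm{dom}\, f$, $\phi=f+h$, $\phi_*=\inf\phi$ attained. Subgradient oracle $f'(x)\in\partial f(x)$ on $\mathrm{dom}\, h$ with $\|f'(x)-f'(y)\|\le2M_f+L_f\|x-y\|$ for $x,y\in\mathrm{dom}\, h$, $M_f,L_f\ge0$. $\ell_f(u;x):=f(x)+\langle f'(x),u-x\rangle$. "Convex function" means proper lsc convex on $\mathbb{R}^n$. BU$(x^c,x,m_f,\lambda)$: given $\lambda>0$, convex $m_f\le f$ with $x=\mathrm{argmin}_u\{m_f(u)+h(u)+\frac1{2\lambda}\|u-x^c\|^2\}$, outputs any convex $m_f^+$ with $\max\{\overline m_f,\ell_f(\cdot;x)\}\le m_f^+\le f$, where $\overline m_f\le f$, $\overline m_f(x)=m_f(x)$ and $x=\mathrm{argmin}_u\{\overline m_f(u)+h(u)+\frac1{2\lambda}\|u-x^c\|^2\}$. U-PB$(\hat x_0,\chi,\lambda_0,\bar\varepsilon,\overline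 N)$, inputs in $\mathrm{dom}\, h\times[0,1)\times\mathbb{R}_{++}\times\mathbb{R}_{++}\times\{1,2,\ldots\}$: Step 0: $\lambda=\lambda_0$, $N=0$, $j=1$, $k=1$; choose convex $f_1$ with $\ell_f(\cdot;\hat x_0)\le f_1\le f$. Step 1: $x_j=\mathrm{argmin}_u\{(f_j+h)(u)+\frac1{2\lambda}\|u-\hat x_{k-1}\|^2\}$; if $\phi(x_j)-\phi_*\le\bar\varepsilon$ stop. Step 2: $\bar\phi_j=\phi(x_j)+\frac\chi{2\lambda}\|x_j-\hat x_{k-1}\|^2$ if $N=0$, else $\bar\phi_j=\min\{\bar\phi_{j-1},\phi(x_j)+\frac\chi{2\lambda}\|x_j-\hat x_{k-1}\|^2\}$; $N=N+1$; $t_j=\bar\phi_j-[(f_j+h)(x_j)+\frac1{2\lambda}\|x_j-\hat x_{k-1}\|^2]$. Step 3: if $t_j>(1-\chi)\bar\varepsilon/2$ and $N<\overline N$: null update $f_{j+1}=\mathrm{BU}(\hat x_{k-1},x_j,f_j,\lambda)$. Otherwise: if $t_j>(1-\chi)\bar\varepsilon/2$ and $N=\overline N$, reset update $\lambda\leftarrow\lambda/2$; else serious update $\hat x_k=x_j$, $\lambda_k=\lambda$, $k\leftarrow k+1$; then set $N=0$ and choose convex $f_{j+1}$ with $\ell_f(\cdot;\hat x_{k-1})\le f_{j+1}\le f$. Step 4: $j\leftarrow j+1$, go to Step 1. A cycle is a reset or serious iteration together with all consecutive null iterations immediately preceding it; its iterations share the same prox stepsize $\lambda$ and prox-center $\hat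 x_{k-1}$, and its first iteration is the one at which $N=0$ when entering Step 2. *)

theory Defs
  imports "HOL-Analysis.Analysis" "HOL-Library.Extended_Real"
begin

text \<open>Extended-real-valued functions on a Euclidean space 'a (= R^n).
  The value \<infinity> represents +\<infinity> (outside the effective domain).\<close>

definition proper_fun :: "('a \<Rightarrow> ereal) \<Rightarrow> bool" where
  "proper_fun F \<longleftrightarrow> (\<forall>x. F x \<noteq> -\<infinity>) \<and> (\<exists>x. F x \<noteq> \<infinity>)"

definition convex_ext :: "('a::real_vector \<Rightarrow> ereal) \<Rightarrow> bool" where
  "convex_ext F \<longleftrightarrow> (\<forall>x y t. 0 \<le> t \<and> t \<le> 1 \<longrightarrow>
      F ((1 - t) *\<^sub>R x + t *\<^sub>R y) \<le> ereal (1 - t) * F x + ereal t * F y)"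

definition lsc_fun :: "('a::topological_space \<Rightarrow> ereal) \<Rightarrow> bool" where
  "lsc_fun F \<longleftrightarrow> (\<forall>x c. c < F x \<longrightarrow> eventually (\<lambda>y. c < F y) (at x))"

definition cvx_fun :: "('a::euclidean_space \<Rightarrow> ereal) \<Rightarrow> bool" where
  "cvx_fun F \<longleftrightarrow> proper_fun F \<and> convex_ext F \<and> lsc_fun F"

definition edom :: "('a \<Rightarrow> ereal) \<Rightarrow> 'a set" where
  "edom F = {x. F x < \<infinity>}"

definition lin :: "('a::real_inner \<Rightarrow> ereal) \<Rightarrow> ('a \<Rightarrow> 'a) \<Rightarrow> 'a \<Rightarrow> 'a \<Rightarrow> ereal" where
  "lin f g x u = f x + ereal (inner (g x) (u - x))"

definition is_argmin :: "('a \<Rightarrow> ereal) \<Rightarrow> 'a \<Rightarrow> bool" where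
  "is_argmin F x \<longleftrightarrow> (\<forall>u. F x \<le> F u)"

definition proxobj :: "('a \<Rightarrow> ereal) \<Rightarrow> ('a \<Rightarrow> ereal) \<Rightarrow> 'a \<Rightarrow> real \<Rightarrow> 'a::real_normed_vector \<Rightarrow> ereal" where
  "proxobj m h xc lam u = m u + h u + ereal ((norm (u - xc))\<^sup>2 / (2 * lam))"

text \<open>Admissible outputs m' of BU(xc, x, m, lambda) (f, h, oracle g fixed).\<close>
definition BU :: "('a::euclidean_space \<Rightarrow> ereal) \<Rightarrow> ('a \<Rightarrow> ereal) \<Rightarrow> ('a \<Rightarrow> 'a)
    \<Rightarrow> 'a \<Rightarrow> 'a \<Rightarrow> ('a \<Rightarrow> ereal) \<Rightarrow> real \<Rightarrow> ('a \<Rightarrow> ereal) \<Rightarrow> bool" where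
  "BU f h g xc x m lam m' \<longleftrightarrow>
     cvx_fun m' \<and> (\<forall>u. m' u \<le> f u) \<and>
     (\<exists>mb. cvx_fun mb \<and> (\<forall>u. mb u \<le> f u) \<and> mb x = m x \<and>
           is_argmin (proxobj mb h xc lam) x \<and>
           (\<forall>u. max (mb u) (lin f g x u) \<le> m' u))"

text \<open>A run of U-PB(x0, chi, lam0, eps, Nbar) consisting of iterations 1..n (none of which stops).
  For iteration l: lam l = prox stepsize, xc l = prox center, NN l = value of N when entering Step 2
  (before the increment), fm l = model f_l, x l = x_l, phib l = \<bar>phi_l, t l = t_l.\<close>
definition upb_run :: "('a::euclidean_space \<Rightarrow> ereal) \<Rightarrow> ('a \<Rightarrow> ereal) \<Rightarrow> ('a \<Rightarrow> 'a)
    \<Rightarrow> 'a \<Rightarrow> real \<Rightarrow> real \<Rightarrow> real \<Rightarrow> nat \<Rightarrow> nat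
    \<Rightarrow> (nat \<Rightarrow> real) \<Rightarrow> (nat \<Rightarrow> 'a) \<Rightarrow> (nat \<Rightarrow> nat) \<Rightarrow> (nat \<Rightarrow> 'a \<Rightarrow> ereal)
    \<Rightarrow> (nat \<Rightarrow> 'a) \<Rightarrow> (nat \<Rightarrow> ereal) \<Rightarrow> (nat \<Rightarrow> ereal) \<Rightarrow> bool" where
  "upb_run f h g x0 chi lam0 eps Nbar n lam xc NN fm x phib t \<longleftrightarrow>
    (let phi = (\<lambda>u. f u + h u);
         phistar = (INF u. phi u);
         thr = ereal ((1 - chi) * eps / 2)
     in
     lam 1 = lam0 \<and> xc 1 = x0 \<and> NN 1 = 0 \<and>
     cvx_fun (fm 1) \<and> (\<forall>u. lin f g x0 u \<le> fm 1 u \<and> fm 1 u \<le> f u) \<and>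
     (\<forall>l\<in>{1..n}.
        is_argmin (proxobj (fm l) h (xc l) (lam l)) (x l) \<and>
        \<not> (phi (x l) - phistar \<le> ereal eps) \<and>
        phib l = (if NN l = 0
                  then phi (x l) + ereal (chi / (2 * lam l) * (norm (x l - xc l))\<^sup>2)
                  else min (phib (l - 1))
                           (phi (x l) + ereal (chi / (2 * lam l) * (norm (x l - xc l))\<^sup>2))) \<and>
        t l = phib l - proxobj (fm l) h (xc l) (lam l) (x l)) \<and>
     (\<forall>l\<in>{1..<n}.
        if t l > thr \<and> NN l + 1 < Nbar
        then \<comment> \<open>null update\<close>
          lam (l + 1) = lam l \<and> xc (l + 1) = xc l \<and> NN (l + 1) = NN l + 1 \<and>
          BU f h g (xc l) (x l) (fm l) (lam l) (fm (l + 1))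
        else
          (if t l > thr \<and> NN l + 1 = Nbar
           then lam (l + 1) = lam l / 2 \<and> xc (l + 1) = xc l   \<comment> \<open>reset update\<close>
           else lam (l + 1) = lam l \<and> xc (l + 1) = x l) \<and>  \<comment> \<open>serious update\<close>
          NN (l + 1) = 0 \<and> cvx_fun (fm (l + 1)) \<and>
          (\<forall>u. lin f g (xc (l + 1)) u \<le> fm (l + 1) u \<and> fm (l + 1) u \<le> f u)))"

definition null_iter :: "real \<Rightarrow> real \<Rightarrow> nat \<Rightarrow> (nat \<Rightarrow> nat) \<Rightarrow> (nat \<Rightarrow> ereal) \<Rightarrow> nat \<Rightarrow> bool" where
  "null_iter chi eps Nbar NN t l \<longleftrightarrow> t l > ereal ((1 - chi) * eps / 2) \<and> NN l + 1 < Nbar"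

end

theory Submission
  imports Defs
begin

(*
  Within a cycle all null iterations share the prox center c and the stepsize \<lambda>. Let x and y
  be consecutive prox points and r = \<parallel>y - x\<parallel>. The model produced by BU dominates both the aggregate
  model, whose prox objective grows quadratically away from its minimiser x (strong convexity),
  and the linearisation of f at x, whose error at y is at most 2 M\<^sub>f r + L\<^sub>f r\<^sup>2 by the
  subgradient and Lipschitz hypotheses. Averaging the two lower bounds with weights
  u\<^sub>\<lambda>/(1 + u\<^sub>\<lambda>) and 1/(1 + u\<^sub>\<lambda>) and absorbing 2 M\<^sub>f r by Young's inequality gives
  t\<^sub>l\<^sub>+\<^sub>1 - d/4 \<le> \<tau> (t\<^sub>l - d/4) with \<tau> = u\<^sub>\<lambda>/(1 + u\<^sub>\<lambda>) and d = (1 - \<chi>) \<epsilon>.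
  Hence t\<^sub>j > d/2 forces d/4 < \<tau>\<^bsup>j-i\<^esup> t\<^sub>i, and ln (1/\<tau>) \<ge> 1/(1 + u\<^sub>\<lambda>) yields the bound.
*)

lemma norm_convex_comb_sq:
  fixes p w :: "'a::real_inner"
  shows "(norm ((1 - t) *\<^sub>R p + t *\<^sub>R w))\<^sup>2
    = (1 - t) * (norm p)\<^sup>2 + t * (norm w)\<^sup>2 - t * (1 - t) * (norm (p - w))\<^sup>2"
  by (simp add: power2_norm_eq_inner inner_add_left inner_add_right inner_diff_left
      inner_diff_right inner_commute algebra_simps)

lemma segment_min_quadratic_growth:
  fixes F :: "'a::real_inner \<Rightarrow> real"
  assumes lam: "lam > 0"
    and min: "\<And>t. 0 < t \<Longrightarrow> t \<le> 1 \<Longrightarrow> F x + (norm (x - c))\<^sup>2 / (2 * lam)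
      \<le> F (x + t *\<^sub>R (u - x)) + (norm (x + t *\<^sub>R (u - x) - c))\<^sup>2 / (2 * lam)"
    and cvx: "\<And>t. 0 < t \<Longrightarrow> t \<le> 1 \<Longrightarrow> F (x + t *\<^sub>R (u - x)) \<le> (1 - t) * F x + t * F u"
  shows "F x + (norm (x - c))\<^sup>2 / (2 * lam) + (norm (u - x))\<^sup>2 / (2 * lam)
    \<le> F u + (norm (u - c))\<^sup>2 / (2 * lam)"
proof -
  define a where "a = F x + (norm (x - c))\<^sup>2 / (2 * lam)"
  define b where "b = F u + (norm (u - c))\<^sup>2 / (2 * lam)"
  define D where "D = (norm (u - x))\<^sup>2 / (2 * lam)"
  have key: "a + (1 - t) * D \<le> b" if t: "0 < t" "t \<le> 1" for t
  proof -
    have e: "x + t *\<^sub>R (u - x) - c = (1 - t) *\<^sub>R (x - c) + t *\<^sub>R (u - c)"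
      by (simp add: algebra_simps)
    have q: "(norm (x + t *\<^sub>R (u - x) - c))\<^sup>2 / (2 * lam)
        = (1 - t) * ((norm (x - c))\<^sup>2 / (2 * lam)) + t * ((norm (u - c))\<^sup>2 / (2 * lam))
          - t * (1 - t) * D"
      unfolding e norm_convex_comb_sq D_def using lam by (simp add: norm_minus_commute field_simps)
    have "a \<le> (1 - t) * a + t * b - t * (1 - t) * D"
      using min[OF t] cvx[OF t] q unfolding a_def b_def by (simp add: algebra_simps)
    then have "t * (a + (1 - t) * D) \<le> t * b"
      by (simp add: algebra_simps)
    then show ?thesis using t by simp
  qed
  have "((\<lambda>t. a + (1 - t) * D) \<longlongrightarrow> a + (1 - 0) * D) (at_right 0)"
    by (intro tendsto_intros)
  moreover have "eventually (\<lambda>t. a + (1 - t) * D \<le> b) (at_right 0)"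
    using eventually_at_right_real[OF zero_less_one] by eventually_elim (auto intro: key)
  ultimately have "a + D \<le> b"
    by (auto intro: tendsto_upperbound)
  then show ?thesis unfolding a_def b_def D_def .
qed

lemma cvx_fun_not_minf: "cvx_fun F \<Longrightarrow> F z \<noteq> -\<infinity>"
  by (auto simp: cvx_fun_def proper_fun_def)

lemma cvx_fun_segment_le:
  assumes F: "cvx_fun F" and fin: "F x = ereal a" "F u = ereal b" and t: "0 \<le> t" "t \<le> 1"
  obtains c where "F (x + t *\<^sub>R (u - x)) = ereal c" "c \<le> (1 - t) * a + t * b"
proof -
  have "x + t *\<^sub>R (u - x) = (1 - t) *\<^sub>R x + t *\<^sub>R u" by (simp add: algebra_simps)
  then have "F (x + t *\<^sub>R (u - x)) \<le> ereal ((1 - t) * a + t * b)"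
    using F t fin unfolding cvx_fun_def convex_ext_def
    by (metis times_ereal.simps(1) plus_ereal.simps(1))
  with cvx_fun_not_minf[OF F] show ?thesis
    using that by (cases "F (x + t *\<^sub>R (u - x))") auto
qed

lemma prox_argmin_finite:
  assumes m: "cvx_fun m" "\<And>u. m u \<le> f u" and h: "cvx_fun h" and dom: "edom h \<subseteq> edom f"
    and am: "is_argmin (proxobj m h c lam) x"
  shows "m x < \<infinity>" "h x < \<infinity>"
proof -
  obtain u where hu: "h u < \<infinity>" using h by (auto simp: cvx_fun_def proper_fun_def less_top)
  then have "m u < \<infinity>" using dom m(2)[of u] by (auto simp: edom_def intro: le_less_trans)
  then have "proxobj m h c lam u < \<infinity>" using hu by (simp add: proxobj_def)
  then have "proxobj m h c lam x < \<infinity>" using am unfolding is_argmin_def by (meson le_less_trans)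
  then show "m x < \<infinity>" "h x < \<infinity>"
    using cvx_fun_not_minf[OF m(1), of x] cvx_fun_not_minf[OF h, of x]
    by (cases "m x"; cases "h x"; simp add: proxobj_def)+
qed

lemma prox_argmin_quadratic_growth:
  fixes m h :: "'a::euclidean_space \<Rightarrow> ereal"
  assumes m: "cvx_fun m" and h: "cvx_fun h" and lam: "lam > 0"
    and am: "is_argmin (proxobj m h c lam) x"
  shows "proxobj m h c lam x + ereal ((norm (u - x))\<^sup>2 / (2 * lam)) \<le> proxobj m h c lam u"
proof (cases "proxobj m h c lam u = \<infinity>")
  case False
  obtain mu hu where u: "m u = ereal mu" "h u = ereal hu"
    using False cvx_fun_not_minf[OF m, of u] cvx_fun_not_minf[OF h, of u]
    by (cases "m u"; cases "h u") (auto simp: proxobj_def)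
  have "proxobj m h c lam x \<le> proxobj m h c lam u" using am unfolding is_argmin_def by blast
  then obtain mx hx where x: "m x = ereal mx" "h x = ereal hx"
    using False cvx_fun_not_minf[OF m, of x] cvx_fun_not_minf[OF h, of x]
    by (cases "m x"; cases "h x") (auto simp: proxobj_def)
  define F where "F z = real_of_ereal (m z) + real_of_ereal (h z)" for z
  have "F x + (norm (x - c))\<^sup>2 / (2 * lam) + (norm (u - x))\<^sup>2 / (2 * lam)
      \<le> F u + (norm (u - c))\<^sup>2 / (2 * lam)"
  proof (rule segment_min_quadratic_growth[OF lam])
    fix s :: real assume s: "0 < s" "s \<le> 1"
    obtain ms where ms: "m (x + s *\<^sub>R (u - x)) = ereal ms" "ms \<le> (1 - s) * mx + s * mu"
      by (rule cvx_fun_segment_le[OF m x(1) u(1) less_imp_le[OF s(1)] s(2)])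
    obtain hs where hs: "h (x + s *\<^sub>R (u - x)) = ereal hs" "hs \<le> (1 - s) * hx + s * hu"
      by (rule cvx_fun_segment_le[OF h x(2) u(2) less_imp_le[OF s(1)] s(2)])
    show "F (x + s *\<^sub>R (u - x)) \<le> (1 - s) * F x + s * F u"
      using ms hs x u by (simp add: F_def algebra_simps)
    have "proxobj m h c lam x \<le> proxobj m h c lam (x + s *\<^sub>R (u - x))"
      using am unfolding is_argmin_def by blast
    then show "F x + (norm (x - c))\<^sup>2 / (2 * lam)
        \<le> F (x + s *\<^sub>R (u - x)) + (norm (x + s *\<^sub>R (u - x) - c))\<^sup>2 / (2 * lam)"
      using ms hs x by (simp add: F_def proxobj_def)
  qed
  then show ?thesis using x u by (simp add: F_def proxobj_def)
qed simp

lemma linearization_error_le: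
  fixes f :: "'a::real_inner \<Rightarrow> ereal"
  assumes subgrad: "f v + ereal (inner (g v) (u - v)) \<le> f u"
    and lip: "norm (g v - g u) \<le> 2 * Mf + Lf * norm (v - u)"
    and fin: "f u = ereal fu" "f v = ereal fv"
  shows "fv \<le> fu + inner (g u) (v - u) + 2 * Mf * norm (v - u) + Lf * (norm (v - u))\<^sup>2"
proof -
  have "fv \<le> fu + inner (g v) (v - u)"
    using subgrad fin by (simp add: inner_diff_right)
  also have "inner (g v) (v - u) = inner (g u) (v - u) + inner (g v - g u) (v - u)"
    by (simp add: inner_diff_left)
  also have "inner (g v - g u) (v - u) \<le> norm (g v - g u) * norm (v - u)"
    by (rule norm_cauchy_schwarz)
  also have "\<dots> \<le> (2 * Mf + Lf * norm (v - u)) * norm (v - u)"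
    using lip by (intro mult_right_mono) auto
  finally show ?thesis by (simp add: algebra_simps power2_eq_square)
qed

lemma linearization_error_margin:
  fixes lam d Mf Lf r :: real
  assumes "lam > 0" "d > 0" "Lf \<ge> 0"
  shows "2 * Mf * r + Lf * r\<^sup>2 \<le> d / 4 + 4 * lam * (2 * Mf\<^sup>2 + d * Lf) / d * (r\<^sup>2 / (2 * lam))"
proof -
  have e: "4 * lam * (2 * Mf\<^sup>2 + d * Lf) / d * (r\<^sup>2 / (2 * lam))
      = 4 * Mf\<^sup>2 * r\<^sup>2 / d + 2 * Lf * r\<^sup>2"
    using assms by (simp add: field_simps power2_eq_square)
  have "d * (d / 4 - 2 * Mf * r + 4 * Mf\<^sup>2 * r\<^sup>2 / d) = (d / 2 - 2 * Mf * r)\<^sup>2"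
    using assms by (simp add: field_simps power2_eq_square)
  then have "0 \<le> d / 4 - 2 * Mf * r + 4 * Mf\<^sup>2 * r\<^sup>2 / d"
    using assms by (metis zero_le_power2 zero_le_mult_iff not_le)
  moreover have "Lf * r\<^sup>2 \<ge> 0" using assms by simp
  ultimately show ?thesis unfolding e by linarith
qed

(*
  One null iteration in real numbers: r = \<parallel>y - x\<parallel> and q = \<parallel>y - c\<parallel>\<^sup>2/(2\<lambda>) for consecutive
  iterates x, y with prox center c; M, M' are the prox-objective values at x and y, P, P' the
  values of \<phi>-bar; mby, liny and m'y are the values at y of the aggregate model, of the
  linearisation of f at x, and of the new model.
*)
lemma null_step_gap_contraction:
  fixes lam d Mf Lf r chi q u P P' M M' m'y mby liny fy hy :: real
  assumes lam: "lam > 0" and d: "d > 0" and Mf: "Mf \<ge> 0" and Lf: "Lf \<ge> 0"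
    and chi: "chi \<le> 1" and q: "q \<ge> 0"
    and u: "u = 4 * lam * (2 * Mf\<^sup>2 + d * Lf) / d"
    and growth: "M + r\<^sup>2 / (2 * lam) \<le> mby + hy + q"
    and model_ge: "mby \<le> m'y" "liny \<le> m'y"
    and M': "M' = m'y + hy + q"
    and lin_err: "fy \<le> liny + 2 * Mf * r + Lf * r\<^sup>2"
    and P': "P' \<le> P" "P' \<le> fy + hy + chi * q"
  shows "P' - M' \<le> u / (1 + u) * (P - M) + (1 - u / (1 + u)) * (d / 4)"
proof -
  have u0: "u \<ge> 0" unfolding u using lam d Mf Lf by simp
  define al where "al = 1 / (1 + u)"
  have al: "0 < al" "al \<le> 1" "u / (1 + u) = 1 - al" "1 - al = al * u"
    using u0 by (auto simp: al_def field_simps)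
  define Q where "Q = r\<^sup>2 / (2 * lam)"
  define E where "E = 2 * Mf * r + Lf * r\<^sup>2"
  have "M' \<ge> (1 - al) * (M + Q) + al * (P' - E)"
  proof -
    have "(1 - al) * (M + Q) \<le> (1 - al) * (mby + hy + q)"
      using growth al unfolding Q_def by (intro mult_left_mono) auto
    moreover have "chi * q \<le> q" using mult_right_mono[OF chi q] by simp
    then have "al * (P' - E) \<le> al * (liny + hy + q)"
      using lin_err P' al unfolding E_def by (intro mult_left_mono) auto
    moreover have "(1 - al) * mby + al * liny \<le> m'y"
      using model_ge al convex_bound_le[of mby m'y liny "1 - al" al] by simp
    ultimately show ?thesis unfolding M' by (simp add: algebra_simps)
  qed
  moreover have "(1 - al) * (M + Q) = (1 - al) * M + al * (u * Q)"
    unfolding al(4) by (simp add: algebra_simps)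
  moreover have "al * (P' - E) = al * P' - al * E" by (simp add: algebra_simps)
  moreover have "(1 - al) * (P' - M) = P' - al * P' - (1 - al) * M" by (simp add: algebra_simps)
  moreover have "al * (E - u * Q) = al * E - al * (u * Q)" by (simp add: algebra_simps)
  ultimately have "P' - M' \<le> (1 - al) * (P' - M) + al * (E - u * Q)"
    by argo
  also have "\<dots> \<le> (1 - al) * (P - M) + al * (d / 4)"
  proof (rule add_mono)
    show "(1 - al) * (P' - M) \<le> (1 - al) * (P - M)"
      using P'(1) al by (intro mult_left_mono) auto
    have "E - u * Q \<le> d / 4"
      using linearization_error_margin[OF lam d Lf, of Mf r] unfolding E_def u Q_def by simp
    then show "al * (E - u * Q) \<le> al * (d / 4)"
      using al by (intro mult_left_mono) auto
  qed
  finally show ?thesis unfolding al(3) by simp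
qed

lemma affine_recursion_iterate:
  fixes T :: "nat \<Rightarrow> real"
  assumes "tau \<ge> 0" and step: "\<And>k. k < K \<Longrightarrow> T (Suc k) \<le> tau * T k + (1 - tau) * c"
  shows "T K - c \<le> tau ^ K * (T 0 - c)"
  using step
proof (induction K)
  case 0 then show ?case by simp
next
  case (Suc K)
  have "T (Suc K) - c \<le> tau * (T K - c)"
    using Suc.prems[of K] by (simp add: algebra_simps)
  also have "\<dots> \<le> tau * (tau ^ K * (T 0 - c))"
    using Suc assms(1) by (intro mult_left_mono) auto
  finally show ?case by simp
qed

lemma geometric_decay_length_bound:
  fixes k :: nat and u d T0 :: real
  assumes u: "u \<ge> 0" and d: "d > 0" and decay: "d / 4 < (u / (1 + u)) ^ k * T0"
  shows "real k < (1 + u) * ln (4 * T0 / d)"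
proof -
  define tau where "tau = u / (1 + u)"
  have tau: "0 \<le> tau" "tau \<le> 1" "1 - tau = 1 / (1 + u)"
    using u by (auto simp: tau_def field_simps)
  have "tau ^ k * T0 > 0" using decay d unfolding tau_def by linarith
  then have pos: "tau ^ k > 0" "T0 > 0"
    using zero_le_power[OF tau(1), of k] by (metis zero_less_mult_iff not_le)+
  have tau_pos: "k > 0 \<Longrightarrow> tau > 0"
    using pos(1) tau(1) by (cases "tau = 0") (auto simp: zero_power)
  show ?thesis
  proof (cases "k = 0")
    case True
    then have "1 < 4 * T0 / d" using decay d by (simp add: field_simps)
    then show ?thesis using True u by (simp add: add_nonneg_pos)
  next
    case False
    have "ln (d / 4) < ln (tau ^ k * T0)" using decay d unfolding tau_def[symmetric] by simp
    also have "\<dots> = real k * ln tau + ln T0"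
      using tau_pos False pos(2) by (simp add: ln_mult ln_realpow)
    finally have "real k * (- ln tau) < ln (4 * T0 / d)"
      using pos(2) d by (simp add: ln_div ln_mult)
    moreover have "1 / (1 + u) \<le> - ln tau"
      using ln_le_minus_one[of tau] tau_pos False tau(3) by simp
    then have "real k / (1 + u) \<le> real k * (- ln tau)"
      using mult_left_mono[of "1 / (1 + u)" "- ln tau" "real k"] by simp
    ultimately have "real k / (1 + u) < ln (4 * T0 / d)" by linarith
    then show ?thesis using u by (simp add: divide_less_eq mult.commute)
  qed
qed

locale upb_cycle =
  fixes f h :: "'a::euclidean_space \<Rightarrow> ereal" and g :: "'a \<Rightarrow> 'a"
    and Mf Lf chi lam0 eps :: real and x0 :: 'a and Nbar n i m :: nat
    and lam :: "nat \<Rightarrow> real" and xc :: "nat \<Rightarrow> 'a" and NN :: "nat \<Rightarrow> nat"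
    and fm :: "nat \<Rightarrow> 'a \<Rightarrow> ereal" and x :: "nat \<Rightarrow> 'a" and phib t :: "nat \<Rightarrow> ereal"
  assumes f_cvx: "cvx_fun f" and h_cvx: "cvx_fun h"
    and dom_sub: "edom h \<subseteq> edom f"
    and subgrad: "\<And>u y. u \<in> edom h \<Longrightarrow> f u + ereal (inner (g u) (y - u)) \<le> f y"
    and Mf: "Mf \<ge> 0" and Lf: "Lf \<ge> 0"
    and lipg: "\<And>u v. u \<in> edom h \<Longrightarrow> v \<in> edom h \<Longrightarrow>
      norm (g u - g v) \<le> 2 * Mf + Lf * norm (u - v)"
    and chi: "0 \<le> chi" "chi < 1" and lam0: "lam0 > 0" and eps: "eps > 0"
    and run: "upb_run f h g x0 chi lam0 eps Nbar n lam xc NN fm x phib t"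
    and cycle: "1 \<le> i" "i \<le> m" "m \<le> n" "NN i = 0"
      "\<forall>l\<in>{i..<m}. null_iter chi eps Nbar NN t l"
begin

lemma run_iteration:
  assumes "l \<in> {1..n}"
  shows "is_argmin (proxobj (fm l) h (xc l) (lam l)) (x l)"
    and "phib l = (if NN l = 0
                  then f (x l) + h (x l) + ereal (chi / (2 * lam l) * (norm (x l - xc l))\<^sup>2)
                  else min (phib (l - 1))
                           (f (x l) + h (x l) + ereal (chi / (2 * lam l) * (norm (x l - xc l))\<^sup>2)))"
    and "t l = phib l - proxobj (fm l) h (xc l) (lam l) (x l)"
  using run assms unfolding upb_run_def Let_def by auto

lemma run_update:
  assumes "l \<in> {1..<n}"
  shows "if t l > ereal ((1 - chi) * eps / 2) \<and> NN l + 1 < Nbar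
    then lam (l + 1) = lam l \<and> xc (l + 1) = xc l \<and> NN (l + 1) = NN l + 1 \<and>
      BU f h g (xc l) (x l) (fm l) (lam l) (fm (l + 1))
    else
      (if t l > ereal ((1 - chi) * eps / 2) \<and> NN l + 1 = Nbar
       then lam (l + 1) = lam l / 2 \<and> xc (l + 1) = xc l
       else lam (l + 1) = lam l \<and> xc (l + 1) = x l) \<and>
      NN (l + 1) = 0 \<and> cvx_fun (fm (l + 1)) \<and>
      (\<forall>u. lin f g (xc (l + 1)) u \<le> fm (l + 1) u \<and> fm (l + 1) u \<le> f u)"
  using run assms unfolding upb_run_def Let_def by blast

lemma model_le_f:
  assumes "l \<in> {1..n}"
  shows "cvx_fun (fm l)" "fm l u \<le> f u"
proof -
  have "cvx_fun (fm l) \<and> (\<forall>u. fm l u \<le> f u)"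
  proof (cases "l = 1")
    case True
    then show ?thesis using run unfolding upb_run_def Let_def by auto
  next
    case False
    then obtain k where "k \<in> {1..<n}" "l = k + 1" using assms by (cases l) auto
    then show ?thesis using run_update[of k] by (auto simp: BU_def split: if_splits)
  qed
  then show "cvx_fun (fm l)" "fm l u \<le> f u" by auto
qed

lemma lam_pos: "l \<in> {1..n} \<Longrightarrow> lam l > 0"
proof (induction l)
  case (Suc k)
  show ?case
  proof (cases "k = 0")
    case True
    then show ?thesis using run lam0 unfolding upb_run_def Let_def by auto
  next
    case False
    then have "k \<in> {1..<n}" using Suc.prems by auto
    then show ?thesis using Suc.IH run_update[of k] by (auto split: if_splits)
  qed
qed simp

lemma null_update:
  assumes "l \<in> {i..<m}"
  shows "lam (Suc l) = lam l" "xc (Suc l) = xc l" "NN (Suc l) = Suc (NN l)"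
    and "BU f h g (xc l) (x l) (fm l) (lam l) (fm (Suc l))"
proof -
  have "l \<in> {1..<n}" "null_iter chi eps Nbar NN t l" using assms cycle by auto
  then show "lam (Suc l) = lam l" "xc (Suc l) = xc l" "NN (Suc l) = Suc (NN l)"
      "BU f h g (xc l) (x l) (fm l) (lam l) (fm (Suc l))"
    using run_update[of l] unfolding null_iter_def by auto
qed

lemma cycle_prox_data:
  assumes "i \<le> l" "l \<le> m"
  shows "lam l = lam i \<and> xc l = xc i"
  using assms by (induction l rule: dec_induct) (auto simp: null_update)

lemma iterate_values_real:
  assumes "l \<in> {1..n}"
  obtains fx hx mx where "f (x l) = ereal fx" "h (x l) = ereal hx" "fm l (x l) = ereal mx"
proof -
  have "fm l (x l) < \<infinity>" "h (x l) < \<infinity>"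
    using prox_argmin_finite[OF model_le_f[OF assms] h_cvx dom_sub run_iteration(1)[OF assms]] by auto
  moreover from this have "f (x l) < \<infinity>" using dom_sub by (auto simp: edom_def)
  ultimately show ?thesis
    using cvx_fun_not_minf[OF f_cvx, of "x l"] cvx_fun_not_minf[OF h_cvx, of "x l"]
      cvx_fun_not_minf[OF model_le_f(1)[OF assms], of "x l"] that
    by (cases "f (x l)"; cases "h (x l)"; cases "fm l (x l)") auto
qed

lemma phib_null_step:
  assumes "l \<in> {i..<m}"
  shows "phib (Suc l) = min (phib l)
    (f (x (Suc l)) + h (x (Suc l)) + ereal (chi * ((norm (x (Suc l) - xc l))\<^sup>2 / (2 * lam l))))"
proof -
  have "Suc l \<in> {1..n}" using assms cycle by auto
  then show ?thesis using run_iteration(2)[of "Suc l"] null_update[OF assms] by simp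
qed

lemma phib_finite:
  assumes "i \<le> l" "l \<le> m"
  shows "\<bar>phib l\<bar> \<noteq> \<infinity>"
  using assms
proof (induction l rule: dec_induct)
  case base
  have l: "i \<in> {1..n}" using cycle by auto
  then show ?case using run_iteration(2)[OF l] cycle(4) by (cases rule: iterate_values_real) auto
next
  case (step l)
  then have "Suc l \<in> {1..n}" using cycle by auto
  then show ?case using phib_null_step[of l] step by (cases rule: iterate_values_real) (auto simp: min_def)
qed

lemma gap_finite:
  assumes "i \<le> l" "l \<le> m"
  shows "\<bar>t l\<bar> \<noteq> \<infinity>"
proof -
  have l: "l \<in> {1..n}" using assms cycle by auto
  then show ?thesis using run_iteration(3)[OF l] phib_finite[OF assms]
    by (cases rule: iterate_values_real) (cases "phib l"; auto simp: proxobj_def)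
qed

lemma gap_contraction:
  assumes l: "l \<in> {i..<m}"
    and u: "u = 4 * lam l * (2 * Mf\<^sup>2 + (1 - chi) * eps * Lf) / ((1 - chi) * eps)"
  shows "real_of_ereal (t (Suc l))
    \<le> u / (1 + u) * real_of_ereal (t l) + (1 - u / (1 + u)) * ((1 - chi) * eps / 4)"
proof -
  let ?c = "xc l" and ?lam = "lam l" and ?z = "x l" and ?y = "x (Suc l)"
  have lz: "l \<in> {1..n}" and ly: "Suc l \<in> {1..n}" using l cycle by auto
  note upd = null_update[OF l]
  obtain mb where mb: "cvx_fun mb" "\<And>u. mb u \<le> f u" "mb ?z = fm l ?z"
    "is_argmin (proxobj mb h ?c ?lam) ?z" "\<And>u. max (mb u) (lin f g ?z u) \<le> fm (Suc l) u"
    using upd(4) unfolding BU_def by auto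
  obtain fz hz mz where z: "f ?z = ereal fz" "h ?z = ereal hz" "fm l ?z = ereal mz"
    using iterate_values_real[OF lz] .
  obtain fy hy my where y: "f ?y = ereal fy" "h ?y = ereal hy" "fm (Suc l) ?y = ereal my"
    using iterate_values_real[OF ly] .
  obtain mby where mby: "mb ?y = ereal mby"
    using cvx_fun_not_minf[OF mb(1)] mb(2)[of ?y] y(1) by (cases "mb ?y") auto
  obtain P P' where P: "phib l = ereal P" "phib (Suc l) = ereal P'"
    using phib_finite[of l] phib_finite[of "Suc l"] l
    by (cases "phib l"; cases "phib (Suc l)") auto
  define r where "r = norm (?y - ?z)"
  define q where "q = (norm (?y - ?c))\<^sup>2 / (2 * ?lam)"
  have growth: "mz + hz + (norm (?z - ?c))\<^sup>2 / (2 * ?lam) + r\<^sup>2 / (2 * ?lam) \<le> mby + hy + q"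
    using prox_argmin_quadratic_growth[OF mb(1) h_cvx lam_pos[OF lz] mb(4), of ?y] mb(3) z y mby
    by (simp add: proxobj_def r_def q_def)
  have model: "mby \<le> my" "fz + inner (g ?z) (?y - ?z) \<le> my"
    using mb(5)[of ?y] mby y z by (auto simp: lin_def)
  have "?z \<in> edom h" "?y \<in> edom h" using z y by (auto simp: edom_def)
  then have lin_err: "fy \<le> fz + inner (g ?z) (?y - ?z) + 2 * Mf * r + Lf * r\<^sup>2"
    unfolding r_def by (intro linearization_error_le[OF subgrad lipg z(1) y(1)])
  have phib: "P' \<le> P" "P' \<le> fy + hy + chi * q"
    using phib_null_step[OF l] P y by (auto simp: q_def min_def split: if_splits)
  have "real_of_ereal (t l) = P - (mz + hz + (norm (?z - ?c))\<^sup>2 / (2 * ?lam))"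
    using run_iteration(3)[OF lz] P z by (simp add: proxobj_def)
  moreover have "real_of_ereal (t (Suc l)) = P' - (my + hy + q)"
    using run_iteration(3)[OF ly] P y upd by (simp add: proxobj_def q_def)
  moreover have "(1 - chi) * eps > 0" "chi \<le> 1" "q \<ge> 0"
    using chi eps lam_pos[OF lz] by (auto simp: q_def)
  ultimately show ?thesis
    using null_step_gap_contraction[OF lam_pos[OF lz] _ Mf Lf _ _ u growth model refl lin_err phib]
    by simp
qed

lemma cycle_length_bound:
  assumes j: "i \<le> j" "j \<le> m" and tj: "t j > ereal ((1 - chi) * eps / 2)"
  shows "real (j - i) < (1 + 4 * lam j * (2 * Mf\<^sup>2 + (1 - chi) * eps * Lf) / ((1 - chi) * eps))
    * ln (4 * real_of_ereal (t i) / ((1 - chi) * eps))"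
proof -
  define d where "d = (1 - chi) * eps"
  define u where "u = 4 * lam j * (2 * Mf\<^sup>2 + d * Lf) / d"
  define T where "T k = real_of_ereal (t (i + k))" for k
  have d: "d > 0" using chi eps by (simp add: d_def)
  have u: "u \<ge> 0" using lam_pos[of j] j cycle Mf Lf d by (simp add: u_def)
  have step: "T (Suc k) \<le> u / (1 + u) * T k + (1 - u / (1 + u)) * (d / 4)" if "k < j - i" for k
  proof -
    have "i + k \<in> {i..<m}" using that j by auto
    moreover have "lam (i + k) = lam j"
      using cycle_prox_data[of "i + k"] cycle_prox_data[of j] that j by auto
    ultimately show ?thesis using gap_contraction[of "i + k" u] by (simp add: T_def u_def d_def)
  qed
  have "T (j - i) - d / 4 \<le> (u / (1 + u)) ^ (j - i) * (T 0 - d / 4)"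
    by (rule affine_recursion_iterate) (use u step in auto)
  moreover have "T (j - i) > d / 2"
    using tj gap_finite[OF j] j by (cases "t j") (auto simp: T_def d_def)
  moreover have "(u / (1 + u)) ^ (j - i) * (d / 4) \<ge> 0" using u d by simp
  ultimately have "d / 4 < (u / (1 + u)) ^ (j - i) * T 0" by (simp add: algebra_simps)
  from geometric_decay_length_bound[OF u d this] show ?thesis by (simp add: T_def u_def d_def)
qed

end

theorem lemma4p2:
  fixes f h :: "'a::euclidean_space \<Rightarrow> ereal" and g :: "'a \<Rightarrow> 'a"
    and Mf Lf chi lam0 eps :: real and x0 :: 'a and Nbar n i j m :: nat
    and lam :: "nat \<Rightarrow> real" and xc :: "nat \<Rightarrow> 'a" and NN :: "nat \<Rightarrow> nat"
    and fm :: "nat \<Rightarrow> 'a \<Rightarrow> ereal" and x :: "nat \<Rightarrow> 'a" and phib t :: "nat \<Rightarrow> ereal"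
  assumes f_cvx: "cvx_fun f" and h_cvx: "cvx_fun h"
    and dom_sub: "edom h \<subseteq> edom f"
    and attained: "\<exists>xs. \<forall>u. f xs + h xs \<le> f u + h u"
    and subgrad: "\<And>u y. u \<in> edom h \<Longrightarrow> f u + ereal (inner (g u) (y - u)) \<le> f y"
    and Mf: "Mf \<ge> 0" and Lf: "Lf \<ge> 0"
    and lipg: "\<And>u v. u \<in> edom h \<Longrightarrow> v \<in> edom h \<Longrightarrow> norm (g u - g v) \<le> 2 * Mf + Lf * norm (u - v)"
    and x0: "x0 \<in> edom h" and chi: "0 \<le> chi" "chi < 1" and lam0: "lam0 > 0"
    and eps: "eps > 0" and Nbar: "Nbar \<ge> 1"
    and run: "upb_run f h g x0 chi lam0 eps Nbar n lam xc NN fm x phib t"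
    \<comment> \<open>{i..m} is a cycle: i is its first iteration, i..m-1 are null, m is a reset or serious iteration\<close>
    and cyc: "1 \<le> i" "i \<le> j" "j \<le> m" "m \<le> n" "NN i = 0"
      "\<forall>l\<in>{i..<m}. null_iter chi eps Nbar NN t l" "\<not> null_iter chi eps Nbar NN t m"
    and tj: "t j > ereal ((1 - chi) * eps / 2)"
  shows "real (j - i) < (1 + 4 * lam j * (2 * Mf\<^sup>2 + (1 - chi) * eps * Lf) / ((1 - chi) * eps))
                        * ln (4 * real_of_ereal (t i) / ((1 - chi) * eps))"
proof -
  interpret upb_cycle f h g Mf Lf chi lam0 eps x0 Nbar n i m lam xc NN fm x phib t
    using assms by unfold_locales auto
  show ?thesis
    using cycle_length_bound[OF cyc(2,3) tj] .
qed

end
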